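(* Let $\{w^k\}$ be the sequence of points produced by Algorithm CMA Light (described in the context) applied to $f=\sum_{i=1}^P f_i$ under the standing assumptions. Then $\{w^k\}$ is bounded.
   Context: Standing assumptions: $f_1,\dots,f_P:\mathbb{R}^n\to\mathbb{R}$ are continuously differentiable and $f=\sum_{i=1}^P f_i$; (A1) for every $w_0$ the level set $\{w: f(w)\le f(w_0)\}$ is compact; (A2) each $\nabla f_p$ is Lipschitz continuous with a common constant $L>0$; (A3) each $f_p$ is nonnegative and has compact level sets. $\texttt{Inner\_Cycle}(w,\zeta)$: set $\widetilde w_0=w$; for $i=1,\dots,P$: $\tilde f_i=f_i(\widetilde w_{i-1})$, $\tilde d_i=-\nabla f_i(\widetilde w_{i-1})$, $\widetilde w_i=\widetilde w_{i-1}+\zeta\tilde d_i$; output $\widetilde w=\widetilde w_P$, $d=\sum_i\tilde d_i$, $\tilde f=\sum_i\tilde f_i$. $\texttt{EDFL\_Light}(F,w,d,\zeta;\gamma,\delta)$: set $j=0,\alpha=\zeta,f_0=F$. If $F>f(w)-\gamma\alpha\|d\|^2$ return $\alpha=0$. Otherwise, while $f(w+(\alpha/\delta)d)\le\min\{f(w)-\gamma\alpha\|d\|^2,f_j\}$ set $f_{j+1}=f(w+(\alpha/\delta)d)$, $j\leftarrow j+1$, $\alpha\leftarrow\alpha/\delta$. Return $\alpha$ and $f(w+\alpha d)$. Algorithm CMA Light: parameters $\zeta^0>0$, $\theta\in(0,1)$, $\tau>0$, $\gamma\in(0,1)$, $\delta\in(0,1)$; $w^0\in\mathbb{R}^n$;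 set $\tilde f^0=f(w^0)$, $\phi^0=\tilde f^0$. For $k=0,1,\dots$: (1) $(\widetilde w^k,d^k,\tilde f^{k+1})=\texttt{Inner\_Cycle}(w^k,\zeta^k)$. (2) If $\tilde f^{k+1}\le\min\{\phi^k-\gamma\zeta^k,f(w^0)\}$: set $\zeta^{k+1}=\zeta^k$, $\alpha^k=\zeta^k$, $\phi^{k+1}=\tilde f^{k+1}$. (3) Else, if $\|d^k\|\le\tau\zeta^k$: set $\zeta^{k+1}=\theta\zeta^k$, $\alpha^k=\zeta^k$ if $\tilde f^{k+1}\le f(w^0)$ and $\alpha^k=0$ otherwise, and $\phi^{k+1}=\phi^k$. (4) Else: $(\widetilde\alpha^k,\hat f^{k+1})=\texttt{EDFL\_Light}(\tilde f^{k+1},w^k,d^k,\zeta^k;\gamma,\delta)$. If $\widetilde\alpha^k\|d^k\|^2\le\tau\zeta^k$: $\zeta^{k+1}=\theta\zeta^k$ and $\alpha^k=\widetilde\alpha^k$ if $\widetilde\alpha^k>0$ and $\hat f^{k+1}\le f(w^0)$; $\alpha^k=\zeta^k$ if $\widetilde\alpha^k=0$ and $\tilde f^{k+1}\le f(w^0)$; $\alpha^k=0$ otherwise. Else: $\zeta^{k+1}=\zeta^k$ and $\alpha^k=\widetilde\alpha^k$ if $\widetilde\alpha^k>0$ and $\hat f^{k+1}\le f(w^0)$, $\alpha^k=0$ otherwise. In both subcases set $\phi^{k+1}=\min\{\hat f^{k+1},\tilde f^{k+1},\phi^k\}$. (5) Set $w^{k+1}=w^k+\alpha^k d^k$. *)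

theory Defs
  imports "HOL-Analysis.Analysis"
begin

text \<open>Components f_1,...,f_P are given as fs :: nat => 'a => real (only indices 1..P matter),
  their gradients as g :: nat => 'a => 'a.\<close>

definition obj :: "(nat \<Rightarrow> 'a \<Rightarrow> real) \<Rightarrow> nat \<Rightarrow> 'a \<Rightarrow> real" where
  "obj fs P w = (\<Sum>i=1..P. fs i w)"

fun inner_pt :: "(nat \<Rightarrow> 'a \<Rightarrow> 'a::real_vector) \<Rightarrow> 'a \<Rightarrow> real \<Rightarrow> nat \<Rightarrow> 'a" where
  "inner_pt g w \<zeta> 0 = w"
| "inner_pt g w \<zeta> (Suc i) = inner_pt g w \<zeta> i + \<zeta> *\<^sub>R (- g (Suc i) (inner_pt g w \<zeta> i))"

definition inner_dir :: "(nat \<Rightarrow> 'a \<Rightarrow> 'a::real_vector) \<Rightarrow> nat \<Rightarrow> 'a \<Rightarrow> real \<Rightarrow> 'a" where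
  "inner_dir g P w \<zeta> = (\<Sum>i=1..P. - g i (inner_pt g w \<zeta> (i - 1)))"

definition inner_fval :: "(nat \<Rightarrow> 'a \<Rightarrow> real) \<Rightarrow> (nat \<Rightarrow> 'a \<Rightarrow> 'a::real_vector) \<Rightarrow> nat \<Rightarrow> 'a \<Rightarrow> real \<Rightarrow> real" where
  "inner_fval fs g P w \<zeta> = (\<Sum>i=1..P. fs i (inner_pt g w \<zeta> (i - 1)))"

text \<open>After j successful loop iterations alpha = zeta/delta^j and the stored value
  f_j is F (j = 0) or f(w + (zeta/delta^j) d) (j > 0).\<close>
definition edfl_cond :: "('a::real_normed_vector \<Rightarrow> real) \<Rightarrow> real \<Rightarrow> 'a \<Rightarrow> 'a \<Rightarrow> real \<Rightarrow> real \<Rightarrow> real \<Rightarrow> nat \<Rightarrow> bool" where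
  "edfl_cond f F w d \<zeta> \<gamma> \<delta> j \<longleftrightarrow>
     f (w + (\<zeta> / \<delta> ^ Suc j) *\<^sub>R d)
       \<le> min (f w - \<gamma> * (\<zeta> / \<delta> ^ j) * (norm d)\<^sup>2)
             (if j = 0 then F else f (w + (\<zeta> / \<delta> ^ j) *\<^sub>R d))"

text \<open>Step size returned by EDFL_Light (the returned function value is f(w + alpha d)).\<close>
definition edfl_alpha :: "('a::real_normed_vector \<Rightarrow> real) \<Rightarrow> real \<Rightarrow> 'a \<Rightarrow> 'a \<Rightarrow> real \<Rightarrow> real \<Rightarrow> real \<Rightarrow> real" where
  "edfl_alpha f F w d \<zeta> \<gamma> \<delta> =
     (if F > f w - \<gamma> * \<zeta> * (norm d)\<^sup>2 then 0
      else \<zeta> / \<delta> ^ (LEAST j. \<not> edfl_cond f F w d \<zeta> \<gamma> \<delta> j))"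

text \<open>One iteration of CMA Light on the state (w^k, zeta^k, phi^k); f0 = f(w^0).\<close>
definition cma_step :: "(nat \<Rightarrow> 'a \<Rightarrow> real) \<Rightarrow> (nat \<Rightarrow> 'a \<Rightarrow> 'a::real_normed_vector) \<Rightarrow> nat
     \<Rightarrow> real \<Rightarrow> real \<Rightarrow> real \<Rightarrow> real \<Rightarrow> real \<Rightarrow> 'a \<times> real \<times> real \<Rightarrow> 'a \<times> real \<times> real" where
  "cma_step fs g P \<theta> \<tau> \<gamma> \<delta> f0 s =
     (case s of (w, \<zeta>, \<phi>) \<Rightarrow>
      let d = inner_dir g P w \<zeta>;
          tf = inner_fval fs g P w \<zeta>
      in if tf \<le> min (\<phi> - \<gamma> * \<zeta>) f0 then (w + \<zeta> *\<^sub>R d, \<zeta>, tf)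
         else if norm d \<le> \<tau> * \<zeta> then
           (w + (if tf \<le> f0 then \<zeta> else 0) *\<^sub>R d, \<theta> * \<zeta>, \<phi>)
         else
           let alt = edfl_alpha (obj fs P) tf w d \<zeta> \<gamma> \<delta>;
               hf = obj fs P (w + alt *\<^sub>R d);
               small = (alt * (norm d)\<^sup>2 \<le> \<tau> * \<zeta>);
               \<alpha> = (if small then
                      (if alt > 0 \<and> hf \<le> f0 then alt
                       else if alt = 0 \<and> tf \<le> f0 then \<zeta> else 0)
                    else (if alt > 0 \<and> hf \<le> f0 then alt else 0))
           in (w + \<alpha> *\<^sub>R d, if small then \<theta> * \<zeta> else \<zeta>, min hf (min tf \<phi>)))"

definition cma_state :: "(nat \<Rightarrow> 'a \<Rightarrow> real) \<Rightarrow> (nat \<Rightarrow> 'a \<Rightarrow> 'a::real_normed_vector) \<Rightarrow> nat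
     \<Rightarrow> real \<Rightarrow> real \<Rightarrow> real \<Rightarrow> real \<Rightarrow> real \<Rightarrow> 'a \<Rightarrow> nat \<Rightarrow> 'a \<times> real \<times> real" where
  "cma_state fs g P \<zeta>0 \<theta> \<tau> \<gamma> \<delta> w0 k =
     (cma_step fs g P \<theta> \<tau> \<gamma> \<delta> (obj fs P w0) ^^ k) (w0, \<zeta>0, obj fs P w0)"

definition cma_iter :: "(nat \<Rightarrow> 'a \<Rightarrow> real) \<Rightarrow> (nat \<Rightarrow> 'a \<Rightarrow> 'a::real_normed_vector) \<Rightarrow> nat
     \<Rightarrow> real \<Rightarrow> real \<Rightarrow> real \<Rightarrow> real \<Rightarrow> real \<Rightarrow> 'a \<Rightarrow> nat \<Rightarrow> 'a" where
  "cma_iter fs g P \<zeta>0 \<theta> \<tau> \<gamma> \<delta> w0 k = fst (cma_state fs g P \<zeta>0 \<theta> \<tau> \<gamma> \<delta> w0 k)"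

end

theory Submission
  imports Defs
begin

(* If an inner cycle from w ends with f~ <= f(w^0), then every f_i(w~_{i-1}) <= f(w^0), since the
  f_i are nonnegative; a nonnegative function with L-Lipschitz gradient satisfies
  |grad f_i|^2 <= 2 L f_i, so |d| <= D := P sqrt(2 L f(w^0)).  Consequently every iteration either
  lands in the level set {f <= f(w^0)}, does not move, or moves by zeta |d| <= zeta D with
  f~ <= f(w^0); such a move is paid for either by the decrease gamma zeta of phi or by the
  decrease (1 - theta) zeta of the step size.  Hence w^k stays within distance
  D/gamma (f(w^0) - phi^k) + D/(1 - theta) (zeta^0 - zeta^k) of the compact level set. *)

lemma lipschitz_gradient_upper_bound:
  fixes f :: "'a::real_inner \<Rightarrow> real"
  assumes deriv: "\<And>x. (f has_derivative (\<lambda>h. g x \<bullet> h)) (at x)"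
    and lipschitz: "\<And>x y. norm (g x - g y) \<le> L * norm (x - y)" and "0 \<le> L"
  shows "f y \<le> f x + g x \<bullet> (y - x) + L / 2 * (norm (y - x))\<^sup>2"
proof -
  define p where "p = y - x"
  define h where "h t = f (x + t *\<^sub>R p) - t * (g x \<bullet> p) - L / 2 * t\<^sup>2 * (norm p)\<^sup>2" for t
  have deriv_h: "(h has_real_derivative (g (x + t *\<^sub>R p) \<bullet> p - g x \<bullet> p - L * t * (norm p)\<^sup>2)) (at t)"
    for t
  proof -
    have "((\<lambda>t. f (x + t *\<^sub>R p)) has_derivative (\<lambda>s. g (x + t *\<^sub>R p) \<bullet> (s *\<^sub>R p))) (at t)"
      by (rule has_derivative_compose[OF _ deriv]) (auto intro!: derivative_eq_intros)
    then have "((\<lambda>t. f (x + t *\<^sub>R p)) has_real_derivative (g (x + t *\<^sub>R p) \<bullet> p)) (at t)"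
      by (simp add: has_field_derivative_def mult.commute[of _ "g (x + t *\<^sub>R p) \<bullet> p"])
    then show ?thesis unfolding h_def
      by (auto intro!: derivative_eq_intros simp: power2_eq_square algebra_simps)
  qed
  have "h 1 \<le> h 0"
  proof (rule DERIV_nonpos_imp_nonincreasing[of 0 1 h])
    fix t :: real assume t: "0 \<le> t" "t \<le> 1"
    have "g (x + t *\<^sub>R p) \<bullet> p - g x \<bullet> p = (g (x + t *\<^sub>R p) - g x) \<bullet> p"
      by (simp add: inner_diff_left)
    also have "\<dots> \<le> norm (g (x + t *\<^sub>R p) - g x) * norm p" by (rule norm_cauchy_schwarz)
    also have "\<dots> \<le> L * norm (t *\<^sub>R p) * norm p"
      using lipschitz[of "x + t *\<^sub>R p" x] by (simp add: mult_right_mono)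
    also have "\<dots> = L * t * (norm p)\<^sup>2" using t by (simp add: power2_eq_square)
    finally show "\<exists>y. DERIV h t :> y \<and> y \<le> 0"
      using deriv_h by (intro exI[of _ "_ - _ - _"]) auto
  qed simp
  then show ?thesis unfolding h_def p_def by (simp add: algebra_simps)
qed

lemma lipschitz_gradient_norm_sq_le:
  fixes f :: "'a::real_inner \<Rightarrow> real"
  assumes deriv: "\<And>x. (f has_derivative (\<lambda>h. g x \<bullet> h)) (at x)"
    and lipschitz: "\<And>x y. norm (g x - g y) \<le> L * norm (x - y)" and "0 < L"
    and nonneg: "\<And>x. 0 \<le> f x"
  shows "(norm (g x))\<^sup>2 \<le> 2 * L * f x"
proof -
  have "f (x - (1 / L) *\<^sub>R g x)
      \<le> f x + g x \<bullet> (x - (1 / L) *\<^sub>R g x - x) + L / 2 * (norm (x - (1 / L) *\<^sub>R g x - x))\<^sup>2"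
    by (rule lipschitz_gradient_upper_bound[OF deriv lipschitz]) (use \<open>0 < L\<close> in auto)
  also have "\<dots> = f x - (norm (g x))\<^sup>2 / (2 * L)"
    using \<open>0 < L\<close>
    by (simp add: power2_eq_square field_simps inner_commute flip: power2_norm_eq_inner)
  finally have "(norm (g x))\<^sup>2 \<le> 2 * L * (f x - f (x - (1 / L) *\<^sub>R g x))"
    using \<open>0 < L\<close> by (simp add: field_simps)
  also have "\<dots> \<le> 2 * L * f x"
    using nonneg[of "x - (1 / L) *\<^sub>R g x"] \<open>0 < L\<close> by simp
  finally show ?thesis .
qed

lemma cma_step_cases:
  assumes "cma_step fs g P \<theta> \<tau> \<gamma> \<delta> f0 (w, \<zeta>, \<phi>) = (w', \<zeta>', \<phi>')"
  obtains (accept) "inner_fval fs g P w \<zeta> \<le> f0" "w' = w + \<zeta> *\<^sub>R inner_dir g P w \<zeta>"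
      "\<zeta>' = \<zeta>" "\<phi>' \<le> \<phi> - \<gamma> * \<zeta>"
  | (shrink) "inner_fval fs g P w \<zeta> \<le> f0" "w' = w + \<zeta> *\<^sub>R inner_dir g P w \<zeta>"
      "\<zeta>' = \<theta> * \<zeta>" "\<phi>' \<le> \<phi>"
  | (land) "obj fs P w' \<le> f0" "\<zeta>' = \<zeta> \<or> \<zeta>' = \<theta> * \<zeta>" "\<phi>' \<le> \<phi>"
  | (stay) "w' = w" "\<zeta>' = \<zeta> \<or> \<zeta>' = \<theta> * \<zeta>" "\<phi>' \<le> \<phi>"
proof -
  define d where "d = inner_dir g P w \<zeta>"
  define tf where "tf = inner_fval fs g P w \<zeta>"
  define alt where "alt = edfl_alpha (obj fs P) tf w d \<zeta> \<gamma> \<delta>"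
  define hf where "hf = obj fs P (w + alt *\<^sub>R d)"
  note step = assms[unfolded cma_step_def Let_def prod.case,
      folded d_def tf_def, folded alt_def, folded hf_def]
  consider "tf \<le> min (\<phi> - \<gamma> * \<zeta>) f0" | "\<not> tf \<le> min (\<phi> - \<gamma> * \<zeta>) f0" "norm d \<le> \<tau> * \<zeta>"
    | "\<not> tf \<le> min (\<phi> - \<gamma> * \<zeta>) f0" "\<not> norm d \<le> \<tau> * \<zeta>"
    by blast
  then show thesis
  proof cases
    case 1
    with step have "w' = w + \<zeta> *\<^sub>R d" "\<zeta>' = \<zeta>" "\<phi>' = tf" by auto
    with 1 show thesis by (intro accept) (auto simp: d_def tf_def)
  next
    case 2
    with step have "w' = w + (if tf \<le> f0 then \<zeta> else 0) *\<^sub>R d" "\<zeta>' = \<theta> * \<zeta>" "\<phi>' = \<phi>"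
      by auto
    then show thesis using shrink stay by (auto simp: d_def tf_def split: if_splits)
  next
    case 3
    with step have "\<phi>' \<le> \<phi>" "\<zeta>' = \<zeta> \<or> \<zeta>' = \<theta> * \<zeta>"
      and "w' = w + alt *\<^sub>R d \<and> hf \<le> f0 \<or> w' = w + \<zeta> *\<^sub>R d \<and> \<zeta>' = \<theta> * \<zeta> \<and> tf \<le> f0 \<or> w' = w"
      by (auto split: if_splits)
    then show thesis using shrink land stay by (auto simp: d_def tf_def hf_def)
  qed
qed

locale cma_light_bounded_gradients =
  fixes fs :: "nat \<Rightarrow> 'a::real_normed_vector \<Rightarrow> real" and g :: "nat \<Rightarrow> 'a \<Rightarrow> 'a"
    and P :: nat and L \<zeta>0 \<theta> \<gamma> :: real and w0 :: 'a
  assumes fs_nonneg: "\<And>i w. i \<in> {1..P} \<Longrightarrow> 0 \<le> fs i w"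
    and norm_gradient_sq_le: "\<And>i w. i \<in> {1..P} \<Longrightarrow> (norm (g i w))\<^sup>2 \<le> 2 * L * fs i w"
    and L_nonneg: "0 \<le> L"
    and \<zeta>0_nonneg: "0 \<le> \<zeta>0"
    and \<theta>: "0 \<le> \<theta>" "\<theta> < 1"
    and \<gamma>_pos: "0 < \<gamma>"
begin

definition f0 :: real where "f0 = obj fs P w0"

definition dir_bound :: real where "dir_bound = real P * sqrt (2 * L * f0)"

definition budget :: "real \<Rightarrow> real \<Rightarrow> real" where
  "budget \<phi> \<zeta> = dir_bound / \<gamma> * (f0 - \<phi>) + dir_bound / (1 - \<theta>) * (\<zeta>0 - \<zeta>)"

definition cma_inv :: "'a \<times> real \<times> real \<Rightarrow> bool" where
  "cma_inv s \<longleftrightarrow> (case s of (w, \<zeta>, \<phi>) \<Rightarrow> 0 \<le> \<zeta> \<and> \<zeta> \<le> \<zeta>0 \<and> 0 \<le> \<phi> \<and> \<phi> \<le> f0 \<and>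
     (\<exists>u. obj fs P u \<le> f0 \<and> dist w u \<le> budget \<phi> \<zeta>))"

lemma obj_nonneg: "0 \<le> obj fs P w"
  unfolding obj_def by (rule sum_nonneg) (use fs_nonneg in auto)

lemma inner_fval_nonneg: "0 \<le> inner_fval fs g P w \<zeta>"
  unfolding inner_fval_def by (rule sum_nonneg) (use fs_nonneg in auto)

lemma dir_bound_nonneg: "0 \<le> dir_bound"
  unfolding dir_bound_def f0_def using obj_nonneg L_nonneg by simp

lemma norm_inner_dir_le:
  assumes "inner_fval fs g P w \<zeta> \<le> f0"
  shows "norm (inner_dir g P w \<zeta>) \<le> dir_bound"
proof -
  have "norm (g i (inner_pt g w \<zeta> (i - 1))) \<le> sqrt (2 * L * f0)" if i: "i \<in> {1..P}" for i
  proof -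
    have "fs i (inner_pt g w \<zeta> (i - 1)) \<le> inner_fval fs g P w \<zeta>"
      unfolding inner_fval_def by (rule member_le_sum) (use i fs_nonneg in auto)
    with assms have "(norm (g i (inner_pt g w \<zeta> (i - 1))))\<^sup>2 \<le> 2 * L * f0"
      using norm_gradient_sq_le[OF i] L_nonneg
      by (meson dual_order.trans mult_left_mono zero_le_mult_iff zero_le_numeral)
    then show ?thesis by (simp add: real_le_rsqrt)
  qed
  then have "(\<Sum>i=1..P. norm (- g i (inner_pt g w \<zeta> (i - 1)))) \<le> dir_bound"
    using sum_mono[of "{1..P}" "\<lambda>i. norm (g i (inner_pt g w \<zeta> (i - 1)))" "\<lambda>_. sqrt (2 * L * f0)"]
    by (simp add: dir_bound_def)
  then show ?thesis
    unfolding inner_dir_def by (rule order_trans[OF norm_sum])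
qed

lemma budget_diff:
  "budget \<phi>' \<zeta>' - budget \<phi> \<zeta> = dir_bound / \<gamma> * (\<phi> - \<phi>') + dir_bound / (1 - \<theta>) * (\<zeta> - \<zeta>')"
  by (simp add: budget_def right_diff_distrib)

lemma budget_mono: "\<phi>' \<le> \<phi> \<Longrightarrow> \<zeta>' \<le> \<zeta> \<Longrightarrow> budget \<phi> \<zeta> \<le> budget \<phi>' \<zeta>'"
  using budget_diff[of \<phi>' \<zeta>' \<phi> \<zeta>] dir_bound_nonneg \<gamma>_pos \<theta>
  by (smt (verit) divide_nonneg_pos mult_nonneg_nonneg)

lemma budget_accept: "\<phi>' \<le> \<phi> - \<gamma> * \<zeta> \<Longrightarrow> \<zeta> * dir_bound \<le> budget \<phi>' \<zeta> - budget \<phi> \<zeta>"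
proof -
  assume "\<phi>' \<le> \<phi> - \<gamma> * \<zeta>"
  then have "dir_bound / \<gamma> * (\<gamma> * \<zeta>) \<le> dir_bound / \<gamma> * (\<phi> - \<phi>')"
    using dir_bound_nonneg \<gamma>_pos by (intro mult_left_mono) auto
  then show ?thesis using \<gamma>_pos by (simp add: budget_diff mult.commute)
qed

lemma budget_shrink: "\<phi>' \<le> \<phi> \<Longrightarrow> \<zeta> * dir_bound \<le> budget \<phi>' (\<theta> * \<zeta>) - budget \<phi> \<zeta>"
proof -
  assume "\<phi>' \<le> \<phi>"
  then have "0 \<le> dir_bound / \<gamma> * (\<phi> - \<phi>')"
    using dir_bound_nonneg \<gamma>_pos by simp
  moreover have "dir_bound / (1 - \<theta>) * (\<zeta> - \<theta> * \<zeta>) = \<zeta> * dir_bound"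
    using \<theta> by (simp add: field_simps)
  ultimately show ?thesis by (simp add: budget_diff)
qed

lemma cma_inv_update:
  assumes inv: "cma_inv (w, \<zeta>, \<phi>)" and "0 \<le> \<zeta>'" "\<zeta>' \<le> \<zeta>" "0 \<le> \<phi>'" "\<phi>' \<le> \<phi>"
    and move: "obj fs P w' \<le> f0 \<or> dist w' w \<le> budget \<phi>' \<zeta>' - budget \<phi> \<zeta>"
  shows "cma_inv (w', \<zeta>', \<phi>')"
proof -
  from inv obtain u where u: "obj fs P u \<le> f0" "dist w u \<le> budget \<phi> \<zeta>"
    and bounds: "\<zeta> \<le> \<zeta>0" "\<phi> \<le> f0"
    unfolding cma_inv_def by auto
  have "\<exists>u. obj fs P u \<le> f0 \<and> dist w' u \<le> budget \<phi>' \<zeta>'"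
    using move
  proof
    assume "obj fs P w' \<le> f0"
    moreover have "0 \<le> budget \<phi>' \<zeta>'"
      using budget_mono[of \<phi>' f0 \<zeta>' \<zeta>0] assms bounds by (simp add: budget_def)
    ultimately show ?thesis by auto
  next
    assume "dist w' w \<le> budget \<phi>' \<zeta>' - budget \<phi> \<zeta>"
    with u show ?thesis using dist_triangle[of w' u w] by (intro exI[of _ u]) auto
  qed
  then show ?thesis unfolding cma_inv_def using assms bounds by auto
qed

lemma cma_step_value_nonneg: "0 \<le> \<phi> \<Longrightarrow> 0 \<le> snd (snd (cma_step fs g P \<theta> \<tau> \<gamma> \<delta> f0 (w, \<zeta>, \<phi>)))"
  by (simp add: cma_step_def Let_def obj_nonneg inner_fval_nonneg)

lemma cma_inv_step:
  assumes "cma_inv s"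
  shows "cma_inv (cma_step fs g P \<theta> \<tau> \<gamma> \<delta> f0 s)"
proof -
  obtain w \<zeta> \<phi> where s: "s = (w, \<zeta>, \<phi>)" by (metis prod_cases3)
  with assms have inv: "cma_inv (w, \<zeta>, \<phi>)" by simp
  obtain w' \<zeta>' \<phi>' where step: "cma_step fs g P \<theta> \<tau> \<gamma> \<delta> f0 (w, \<zeta>, \<phi>) = (w', \<zeta>', \<phi>')"
    by (metis prod_cases3)
  from inv have \<zeta>: "0 \<le> \<zeta>" and "0 \<le> \<phi>" unfolding cma_inv_def by auto
  then have \<phi>': "0 \<le> \<phi>'" using cma_step_value_nonneg[of \<phi> \<tau> \<delta> w \<zeta>] step by simp
  have \<theta>\<zeta>: "0 \<le> \<theta> * \<zeta>" "\<theta> * \<zeta> \<le> \<zeta>"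
    using \<zeta> \<theta> by (auto intro: mult_left_le_one_le)
  have short: "dist (w + \<zeta> *\<^sub>R inner_dir g P w \<zeta>) w \<le> \<zeta> * dir_bound"
    if "inner_fval fs g P w \<zeta> \<le> f0"
    using norm_inner_dir_le[OF that] \<zeta> by (simp add: dist_norm mult_left_mono)
  from step have "cma_inv (w', \<zeta>', \<phi>')"
  proof (cases rule: cma_step_cases)
    case accept
    with short budget_accept \<gamma>_pos \<zeta> \<phi>' show ?thesis
      by (intro cma_inv_update[OF inv]) (auto intro: order_trans)
  next
    case shrink
    with short budget_shrink \<theta>\<zeta> \<phi>' show ?thesis
      by (intro cma_inv_update[OF inv]) (auto intro: order_trans)
  next
    case land
    with \<theta>\<zeta> \<zeta> \<phi>' show ?thesis
      by (intro cma_inv_update[OF inv]) auto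
  next
    case stay
    with \<theta>\<zeta> \<zeta> \<phi>' budget_mono[of \<phi>' \<phi> \<zeta>' \<zeta>] show ?thesis
      by (intro cma_inv_update[OF inv]) auto
  qed
  then show ?thesis using s step by simp
qed

lemma cma_inv_state: "cma_inv (cma_state fs g P \<zeta>0 \<theta> \<tau> \<gamma> \<delta> w0 k)"
proof (induction k)
  case 0
  show ?case
    using \<zeta>0_nonneg obj_nonneg by (auto simp: cma_state_def cma_inv_def budget_def f0_def)
next
  case (Suc k)
  then show ?case
    using cma_inv_step[of _ \<tau> \<delta>] by (simp add: cma_state_def f0_def)
qed

lemma bounded_range_cma_iter:
  assumes "bounded {w. obj fs P w \<le> f0}"
  shows "bounded (range (cma_iter fs g P \<zeta>0 \<theta> \<tau> \<gamma> \<delta> w0))"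
proof -
  have "range (cma_iter fs g P \<zeta>0 \<theta> \<tau> \<gamma> \<delta> w0) \<subseteq> {w. obj fs P w \<le> f0} + cball 0 (budget 0 0)"
  proof safe
    fix k
    obtain w \<zeta> \<phi> where s: "cma_state fs g P \<zeta>0 \<theta> \<tau> \<gamma> \<delta> w0 k = (w, \<zeta>, \<phi>)"
      by (metis prod_cases3)
    with cma_inv_state[of \<tau> \<delta> k] obtain u where "obj fs P u \<le> f0" "dist w u \<le> budget 0 0"
      unfolding cma_inv_def using budget_mono[of 0 \<phi> 0 \<zeta>] by auto
    then have "u + (w - u) \<in> {w. obj fs P w \<le> f0} + cball 0 (budget 0 0)"
      by (intro set_plus_intro) (auto simp: dist_norm norm_minus_commute)
    then show "cma_iter fs g P \<zeta>0 \<theta> \<tau> \<gamma> \<delta> w0 k \<in> {w. obj fs P w \<le> f0} + cball 0 (budget 0 0)"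
      using s by (simp add: cma_iter_def)
  qed
  then show ?thesis
    using bounded_plus[OF assms bounded_cball, folded set_plus_image] bounded_subset by blast
qed

end

theorem lemma3:
  fixes fs :: "nat \<Rightarrow> 'a::euclidean_space \<Rightarrow> real"
    and g :: "nat \<Rightarrow> 'a \<Rightarrow> 'a"
    and P :: nat and L \<zeta>0 \<theta> \<tau> \<gamma> \<delta> :: real and w0 :: 'a
  assumes grad: "\<And>i w. i \<in> {1..P} \<Longrightarrow> (fs i has_derivative (\<lambda>h. g i w \<bullet> h)) (at w)"
    and grad_cont: "\<And>i. i \<in> {1..P} \<Longrightarrow> continuous_on UNIV (g i)"
    and A1: "\<And>v. compact {w. obj fs P w \<le> obj fs P v}"
    and L_pos: "L > 0"
    and A2: "\<And>i x y. i \<in> {1..P} \<Longrightarrow> norm (g i x - g i y) \<le> L * norm (x - y)"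
    and A3_nonneg: "\<And>i w. i \<in> {1..P} \<Longrightarrow> fs i w \<ge> 0"
    and A3_level: "\<And>i v. i \<in> {1..P} \<Longrightarrow> compact {w. fs i w \<le> fs i v}"
    and \<zeta>0_pos: "\<zeta>0 > 0"
    and \<theta>: "0 < \<theta>" "\<theta> < 1"
    and \<tau>: "\<tau> > 0"
    and \<gamma>: "0 < \<gamma>" "\<gamma> < 1"
    and \<delta>: "0 < \<delta>" "\<delta> < 1"
  shows "bounded (range (cma_iter fs g P \<zeta>0 \<theta> \<tau> \<gamma> \<delta> w0))"
proof -
  interpret cma_light_bounded_gradients fs g P L \<zeta>0 \<theta> \<gamma> w0
  proof
    fix i w assume "i \<in> {1..P}"
    then show "(norm (g i w))\<^sup>2 \<le> 2 * L * fs i w"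
      using grad A2 A3_nonneg L_pos by (intro lipschitz_gradient_norm_sq_le[where f = "fs i"]) auto
  qed (use A3_nonneg L_pos \<zeta>0_pos \<theta> \<gamma> in auto)
  show ?thesis
    using compact_imp_bounded[OF A1[of w0]] by (intro bounded_range_cma_iter) (simp add: f0_def)
qed

end
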